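(* Let $k\ge3$ and $P_k=I+\frac16U_k$. Then all eigenvalues of $P_k$ are real. Ordering them as $\lambda_k\le\lambda_{k-1}\le\cdots\le\lambda_2\le\lambda_1$, we have $\lambda_1=1$ and $$\max(|\lambda_k|,|\lambda_2|)\le 1-\frac{1}{3k^2}.$$
   Context: The matrices $U_k$ ($k\ge3$) are: $U_3=\begin{pmatrix}-4&4&0\\2&-4&2\\0&4&-4\end{pmatrix}$; for $k\ge4$, $U_k$ is the $k\times k$ tridiagonal matrix with first row $(-4,4,0,\dots,0)$, second row $(2,-5,3,0,\dots,0)$, rows $3,\dots,k-2$ having entries $3,-6,3$ on the sub-, main and super-diagonal, row $k-1$ equal to $(0,\dots,0,3,-5,2)$, and last row $(0,\dots,0,4,-4)$. (So $U_4=\begin{pmatrix}-4&4&0&0\\2&-5&3&0\\0&3&-5&2\\0&0&4&-4\end{pmatrix}$.) $I$ denotes the $k\times k$ identity matrix. *)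

theory Defs
  imports "Jordan_Normal_Form.Char_Poly" "HOL.Complex"
begin

(* U_k as a k x k real matrix, 0-indexed rows/columns i,j < k *)
definition U_entry :: "nat \<Rightarrow> nat \<Rightarrow> nat \<Rightarrow> real" where
  "U_entry k i j =
    (if k = 3 then
       (if i = 0 then (if j = 0 then -4 else if j = 1 then 4 else 0)
        else if i = 1 then (if j = 0 then 2 else if j = 1 then -4 else if j = 2 then 2 else 0)
        else (if j = 1 then 4 else if j = 2 then -4 else 0))
     else
       (if i = 0 then (if j = 0 then -4 else if j = 1 then 4 else 0)
        else if i = 1 then (if j = 0 then 2 else if j = 1 then -5 else if j = 2 then 3 else 0)
        else if i = k - 1 then (if j = k - 2 then 4 else if j = k - 1 then -4 else 0)
        else if i = k - 2 then (if j = k - 3 then 3 else if j = k - 2 then -5 else if j = k - 1 then 2 else 0)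
        else (if j + 1 = i then 3 else if j = i then -6 else if j = i + 1 then 3 else 0)))"

definition U :: "nat \<Rightarrow> real mat" where
  "U k = mat k k (\<lambda>(i, j). U_entry k i j)"

definition P :: "nat \<Rightarrow> real mat" where
  "P k = 1\<^sub>m k + (1/6) \<cdot>\<^sub>m U k"

end

theory Submission
  imports Defs Complex_Main
begin

text \<open>
  For \<open>k \<ge> 4\<close> the eigenvalue equation \<open>P v = l v\<close> with \<open>v\<^sub>0 = 1\<close> can be solved row by
  row: the first \<open>k - 1\<close> rows determine \<open>v\<close> uniquely, the interior rows giving the Chebyshev
  recurrence \<open>v\<^sub>i\<^sub>+\<^sub>1 = 2 l v\<^sub>i - v\<^sub>i\<^sub>-\<^sub>1\<close>. Hence \<open>l\<close> is an eigenvalue iff the last row holds,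
  i.e. iff a polynomial \<open>char_fun k l\<close> vanishes. Substituting \<open>l = cos t\<close> gives
  \<open>4 sin t \<cdot> char_fun k (cos t) = (1 - cos t)/2 \<cdot> (9 sin kt + 6 sin (k-2)t + sin (k-4)t)\<close>,
  whose sign alternates on the nodes \<open>t\<^sub>m = (2m+1)\<pi>/(2k)\<close>, \<open>m < k\<close>. By the intermediate value
  theorem there are \<open>k - 1\<close> eigenvalues strictly between consecutive \<open>cos t\<^sub>m\<close>; together with
  the eigenvalue \<open>1\<close> (constant eigenvector) these are all \<open>k\<close> eigenvalues, they are simple and
  real, and all but \<open>1\<close> lie in \<open>(-cos t\<^sub>0, cos t\<^sub>0)\<close>, where
  \<open>cos (\<pi>/(2k)) \<le> 1 - 1/(3k\<^sup>2)\<close>. The case \<open>k = 3\<close> is computed by hand.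
\<close>

section \<open>Characteristic polynomials with simple eigenvalues\<close>

definition listed_spectrum :: "'a::{comm_ring_1,linorder} mat \<Rightarrow> nat \<Rightarrow> (nat \<Rightarrow> 'a) \<Rightarrow> bool" where
  "listed_spectrum A n lam \<longleftrightarrow>
     (\<forall>i j. 1 \<le> i \<longrightarrow> i < j \<longrightarrow> j \<le> n \<longrightarrow> lam j < lam i) \<and> (\<forall>i\<in>{1..n}. eigenvalue A (lam i))"

lemma eigenvalueI_mult_vec:
  fixes A :: "'a::field mat"
  assumes A: "A \<in> carrier_mat n n" and i: "i < n" "f i \<noteq> 0"
    and mult: "\<And>j. j < n \<Longrightarrow> (A *\<^sub>v vec n f) $ j = l * f j"
  shows "eigenvalue A l"
proof -
  have "vec n f \<noteq> 0\<^sub>v n"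
    using i by (metis index_vec index_zero_vec(1))
  moreover have "A *\<^sub>v vec n f = l \<cdot>\<^sub>v vec n f"
    using A mult by (intro eq_vecI) auto
  ultimately have "eigenvector A (vec n f) l"
    using A unfolding eigenvector_def by auto
  then show ?thesis
    unfolding eigenvalue_def by blast
qed

lemma char_poly_eq_prod_eigenvalues:
  fixes A :: "'a::field mat"
  assumes A: "A \<in> carrier_mat n n" and inj: "inj_on lam {1..n}"
    and ev: "\<And>i. i \<in> {1..n} \<Longrightarrow> eigenvalue A (lam i)"
  shows "char_poly A = (\<Prod>i = 1..n. [:- lam i, 1:])"
proof (rule poly_eqI_degree_lead_coeff[of _ n _ "lam ` {1..n}"])
  have dm: "degree (char_poly A) = n" "coeff (char_poly A) n = 1"
    using degree_monic_char_poly[OF A] by auto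
  have dq: "degree (\<Prod>i = 1..n. [:- lam i, 1:]) = n"
    by (subst degree_prod_eq_sum_degree) auto
  moreover have "lead_coeff (\<Prod>i = 1..n. [:- lam i, 1:]) = 1"
    by (simp add: lead_coeff_prod)
  ultimately show "coeff (char_poly A) n = coeff (\<Prod>i = 1..n. [:- lam i, 1:]) n"
    using dm by simp
  show "n \<le> card (lam ` {1..n})"
    using inj by (simp add: card_image)
  show "degree (char_poly A) \<le> n" "degree (\<Prod>i = 1..n. [:- lam i, 1:]) \<le> n"
    using dm dq by simp_all
  fix z assume "z \<in> lam ` {1..n}"
  then obtain i where i: "i \<in> {1..n}" "z = lam i" by auto
  then have "poly (char_poly A) z = 0"
    using ev eigenvalue_root_char_poly[OF A] by simp
  moreover have "poly (\<Prod>i = 1..n. [:- lam i, 1:]) z = 0"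
    using i by (auto simp: poly_prod prod_zero_iff)
  ultimately show "poly (char_poly A) z = poly (\<Prod>i = 1..n. [:- lam i, 1:]) z"
    by simp
qed

lemma char_poly_listed_spectrum:
  fixes A :: "'a::{field,linorder} mat"
  assumes "A \<in> carrier_mat n n" "listed_spectrum A n lam"
  shows "char_poly A = (\<Prod>i = 1..n. [:- lam i, 1:])"
proof (rule char_poly_eq_prod_eigenvalues)
  show "inj_on lam {1..n}"
  proof (rule inj_onI)
    fix i j assume "i \<in> {1..n}" "j \<in> {1..n}" "lam i = lam j"
    then show "i = j"
      using assms(2) unfolding listed_spectrum_def
      by (metis atLeastAtMost_iff linorder_neqE_nat order_less_irrefl)
  qed
qed (use assms in \<open>auto simp: listed_spectrum_def\<close>)

lemma eigenvalue_of_real_mat_real: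
  fixes A :: "real mat"
  assumes A: "A \<in> carrier_mat n n" and I: "finite I"
    and split: "char_poly A = (\<Prod>i\<in>I. [:- lam i, 1:])"
    and ev: "eigenvalue (map_mat complex_of_real A) z"
  shows "z \<in> \<real>"
proof -
  interpret of_real_poly: map_poly_comm_ring_hom complex_of_real ..
  have "poly (char_poly (map_mat complex_of_real A)) z = 0"
    using ev eigenvalue_root_char_poly[of "map_mat complex_of_real A" n] A by simp
  also have "char_poly (map_mat complex_of_real A) = map_poly complex_of_real (char_poly A)"
    by (rule of_real_hom.char_poly_hom[OF A])
  also have "\<dots> = (\<Prod>i\<in>I. map_poly complex_of_real [:- lam i, 1:])"
    unfolding split by (rule of_real_poly.hom_prod)
  finally obtain i where "poly (map_poly complex_of_real [:- lam i, 1:]) z = 0"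
    using I by (auto simp: poly_prod prod_zero_iff)
  then show ?thesis
    by simp
qed

lemma P_carrier: "P k \<in> carrier_mat k k"
  by (simp add: P_def U_def)

lemma P_index:
  "i < k \<Longrightarrow> j < k \<Longrightarrow> P k $$ (i, j) = (if i = j then 1 else 0) + U_entry k i j / 6"
  by (simp add: P_def U_def)

lemma P_mult_vec: "i < k \<Longrightarrow> (P k *\<^sub>v vec k f) $ i = (\<Sum>j<k. P k $$ (i, j) * f j)"
  unfolding P_def U_def by (auto simp: scalar_prod_def row_def atLeast0LessThan intro!: sum.cong)

lemma P_mult_vec_first:
  assumes "k \<ge> 4"
  shows "(P k *\<^sub>v vec k f) $ 0 = 1/3 * f 0 + 2/3 * f 1"
proof -
  have "(\<Sum>j<k. P k $$ (0, j) * f j) = (\<Sum>j\<in>{0, 1}. P k $$ (0, j) * f j)"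
    by (rule sum.mono_neutral_right) (use assms in \<open>auto simp: P_index U_entry_def\<close>)
  then show ?thesis
    using assms by (simp add: P_mult_vec P_index U_entry_def)
qed

lemma P_mult_vec_second:
  assumes "k \<ge> 4"
  shows "(P k *\<^sub>v vec k f) $ 1 = 1/3 * f 0 + 1/6 * f 1 + 1/2 * f 2"
proof -
  have "(\<Sum>j<k. P k $$ (1, j) * f j) = (\<Sum>j\<in>{0, 1, 2}. P k $$ (1, j) * f j)"
    by (rule sum.mono_neutral_right) (use assms in \<open>auto simp: P_index U_entry_def\<close>)
  then show ?thesis
    using assms by (simp add: P_mult_vec P_index U_entry_def)
qed

lemma P_mult_vec_interior:
  assumes "2 \<le> i" "i + 3 \<le> k"
  shows "(P k *\<^sub>v vec k f) $ i = 1/2 * f (i - 1) + 1/2 * f (i + 1)"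
proof -
  define a b where "a = i - 2" and "b = k - (i + 3)"
  have ab: "i = a + 2" "k = a + 5 + b"
    using assms unfolding a_def b_def by simp_all
  have "(P k *\<^sub>v vec k f) $ i = (\<Sum>j<k. P k $$ (i, j) * f j)"
    using assms by (simp add: P_mult_vec)
  also have "\<dots> = (\<Sum>j\<in>{a + 1, a + 2, a + 3}. P k $$ (i, j) * f j)"
    by (rule sum.mono_neutral_right) (use ab in \<open>auto simp: P_index U_entry_def\<close>)
  also have "\<dots> = 1/2 * f (a + 1) + 1/2 * f (a + 3)"
    using ab by (simp add: P_index U_entry_def)
  finally show ?thesis
    using ab by (simp add: numeral_eq_Suc)
qed

lemma P_mult_vec_penultimate:
  assumes "k \<ge> 4"
  shows "(P k *\<^sub>v vec k f) $ (k - 2) = 1/2 * f (k - 3) + 1/6 * f (k - 2) + 1/3 * f (k - 1)"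
proof -
  define m where "m = k - 4"
  have m: "k = m + 4"
    using assms unfolding m_def by simp
  have "(P k *\<^sub>v vec k f) $ (k - 2) = (\<Sum>j<k. P k $$ (k - 2, j) * f j)"
    using assms by (simp add: P_mult_vec)
  also have "\<dots> = (\<Sum>j\<in>{m + 1, m + 2, m + 3}. P k $$ (k - 2, j) * f j)"
    by (rule sum.mono_neutral_right) (use m in \<open>auto simp: P_index U_entry_def\<close>)
  also have "\<dots> = 1/2 * f (m + 1) + 1/6 * f (m + 2) + 1/3 * f (m + 3)"
    using m by (simp add: P_index U_entry_def)
  finally show ?thesis
    using m by (simp add: numeral_eq_Suc)
qed

lemma P_mult_vec_last:
  assumes "k \<ge> 4"
  shows "(P k *\<^sub>v vec k f) $ (k - 1) = 2/3 * f (k - 2) + 1/3 * f (k - 1)"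
proof -
  define m where "m = k - 4"
  have m: "k = m + 4"
    using assms unfolding m_def by simp
  have "(P k *\<^sub>v vec k f) $ (k - 1) = (\<Sum>j<k. P k $$ (k - 1, j) * f j)"
    using assms by (simp add: P_mult_vec)
  also have "\<dots> = (\<Sum>j\<in>{m + 2, m + 3}. P k $$ (k - 1, j) * f j)"
    by (rule sum.mono_neutral_right) (use m in \<open>auto simp: P_index U_entry_def\<close>)
  also have "\<dots> = 2/3 * f (m + 2) + 1/3 * f (m + 3)"
    using m by (simp add: P_index U_entry_def)
  finally show ?thesis
    using m by (simp add: numeral_eq_Suc)
qed

text \<open>
  Solving rows \<open>0, \<dots>, k - 2\<close> of \<open>P k v = l v\<close> forward from \<open>v\<^sub>0 = 1\<close> gives
  \<open>v\<^sub>j\<^sub>+\<^sub>1 = eigen_seq l j\<close> for \<open>j + 2 < k\<close> and \<open>v\<^sub>k\<^sub>-\<^sub>1 = eigen_fun k l (k - 1)\<close>;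
  \<open>char_fun k l\<close> is what remains of the last row.
\<close>

fun eigen_seq :: "real \<Rightarrow> nat \<Rightarrow> real" where
  "eigen_seq l 0 = (3*l - 1) / 2"
| "eigen_seq l (Suc 0) = (6*l^2 - 3*l - 1) / 2"
| "eigen_seq l (Suc (Suc j)) = 2*l * eigen_seq l (Suc j) - eigen_seq l j"

definition eigen_fun :: "nat \<Rightarrow> real \<Rightarrow> nat \<Rightarrow> real" where
  "eigen_fun k l i =
     (if i = 0 then 1 else if i < k - 1 then eigen_seq l (i - 1)
      else (3*l - 1/2) * eigen_seq l (k - 3) - 3/2 * eigen_seq l (k - 4))"

definition char_fun :: "nat \<Rightarrow> real \<Rightarrow> real" where
  "char_fun k l = - 1/2 * ((6*l^2 - 3*l - 1) * eigen_seq l (k - 3) - (3*l - 1) * eigen_seq l (k - 4))"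

lemma eigen_fun_rows:
  assumes k: "k \<ge> 4" and i: "i < k - 1"
  shows "(P k *\<^sub>v vec k (eigen_fun k l)) $ i = l * eigen_fun k l i"
proof -
  define m where "m = k - 4"
  have m: "k = m + 4"
    using k unfolding m_def by simp
  consider "i = 0" | "i = 1" | "2 \<le> i" "i + 3 \<le> k" | "i = k - 2"
    using i k by linarith
  then show ?thesis
  proof cases
    case 1
    show ?thesis
      unfolding 1 P_mult_vec_first[OF k] using m by (simp add: eigen_fun_def field_simps)
  next
    case 2
    show ?thesis
      unfolding 2 P_mult_vec_second[OF k] using m
      by (simp add: eigen_fun_def numeral_eq_Suc field_simps power2_eq_square)
  next
    case 3
    then obtain a where a: "i = a + 2"
      using le_Suc_ex by (metis add.commute)
    have "i + 1 < k - 1"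
      using 3 by simp
    then show ?thesis
      using 3 by (simp add: P_mult_vec_interior eigen_fun_def a numeral_eq_Suc field_simps)
  next
    case 4
    show ?thesis
      unfolding 4 P_mult_vec_penultimate[OF k] using m
      by (simp add: eigen_fun_def numeral_eq_Suc field_simps)
  qed
qed

lemma eigen_fun_last_row:
  assumes k: "k \<ge> 4"
  shows "(P k *\<^sub>v vec k (eigen_fun k l)) $ (k - 1) = l * eigen_fun k l (k - 1) + char_fun k l"
proof -
  define m where "m = k - 4"
  have m: "k = m + 4"
    using k unfolding m_def by simp
  show ?thesis
    unfolding P_mult_vec_last[OF k]
    using m by (simp add: eigen_fun_def char_fun_def algebra_simps power2_eq_square)
qed

lemma eigenvalue_if_char_fun_zero:
  assumes "k \<ge> 4" "char_fun k l = 0"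
  shows "eigenvalue (P k) l"
proof (rule eigenvalueI_mult_vec[OF P_carrier, of 0])
  fix i assume "i < k"
  then consider "i < k - 1" | "i = k - 1"
    by linarith
  then show "(P k *\<^sub>v vec k (eigen_fun k l)) $ i = l * eigen_fun k l i"
    by cases (use assms eigen_fun_rows eigen_fun_last_row[OF assms(1)] in auto)
qed (use assms in \<open>auto simp: eigen_fun_def\<close>)

section \<open>Trigonometric form and sign changes\<close>

lemma eigen_seq_cos:
  "2 * sin t * eigen_seq (cos t) j =
     (6 * cos t ^ 2 - 3 * cos t - 1) * sin (real j * t) - (3 * cos t - 1) * sin ((real j - 1) * t)"
proof (induction j rule: induct_nat_012)
  case 0
  then show ?case
    by (simp add: field_simps)
next
  case 1
  then show ?case
    by simp
next
  case (ge2 j)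
  have sin_step: "sin (x + t) = 2 * cos t * sin x - sin (x - t)" for x
    by (simp add: sin_add sin_diff)
  have "2 * sin t * eigen_seq (cos t) (Suc (Suc j)) =
      2 * cos t * (2 * sin t * eigen_seq (cos t) (Suc j)) - 2 * sin t * eigen_seq (cos t) j"
    by (simp add: algebra_simps)
  also have "\<dots> = (6 * cos t ^ 2 - 3 * cos t - 1) * sin ((real j + 1) * t + t)
      - (3 * cos t - 1) * sin (real j * t + t)"
    unfolding ge2 sin_step by (simp add: algebra_simps)
  finally show ?case
    by (simp add: algebra_simps)
qed

lemma char_fun_cos:
  assumes "k \<ge> 4"
  shows "4 * sin t * char_fun k (cos t) =
    (1 - cos t) / 2 * (9 * sin (real k * t) + 6 * sin ((real k - 2) * t) + sin ((real k - 4) * t))"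
proof -
  define m where "m = k - 4"
  have km: "k = m + 4"
    using assms unfolding m_def by simp
  define x where "x = real m * t"
  define c where "c = cos t"
  define s where "s = sin t"
  have A: "2 * s * eigen_seq c (m + 1) = (6 * c^2 - 3 * c - 1) * sin (x + t) - (3 * c - 1) * sin x"
    using eigen_seq_cos[of t "m + 1"] unfolding x_def c_def s_def by (simp add: algebra_simps)
  have B: "2 * s * eigen_seq c m = (6 * c^2 - 3 * c - 1) * sin x - (3 * c - 1) * sin (x - t)"
    using eigen_seq_cos[of t m] unfolding x_def c_def s_def by (simp add: algebra_simps)
  have L: "4 * s * char_fun k c =
      - ((6 * c^2 - 3 * c - 1) * (2 * s * eigen_seq c (m + 1)) - (3 * c - 1) * (2 * s * eigen_seq c m))"
    unfolding km by (simp add: char_fun_def algebra_simps)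
  have angles: "real k * t = x + 4 * t" "(real k - 2) * t = x + 2 * t" "(real k - 4) * t = x"
    unfolding x_def km by (simp_all add: algebra_simps)
  have double: "sin (2 * t) = 2 * s * c" "cos (2 * t) = 2 * c^2 - 1"
    unfolding s_def c_def by (simp_all add: sin_double cos_double_cos)
  have quadruple: "sin (4 * t) = 4 * s * c * (2 * c^2 - 1)" "cos (4 * t) = 2 * (2 * c^2 - 1)^2 - 1"
    using sin_double[of "2 * t"] cos_double_cos[of "2 * t"] unfolding double by simp_all
  have pythagoras: "s^2 + c^2 = 1"
    unfolding s_def c_def by simp
  have "4 * s * char_fun k c = (1 - c) / 2 * (9 * sin (x + 4 * t) + 6 * sin (x + 2 * t) + sin x)"
    unfolding L A B sin_add sin_diff quadruple double using pythagoras
    by (simp add: s_def[symmetric] c_def[symmetric] field_simps)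
      (simp add: power2_eq_square algebra_simps eval_nat_numeral)
  then show ?thesis
    unfolding angles s_def c_def .
qed

definition node_angle :: "nat \<Rightarrow> nat \<Rightarrow> real" where
  "node_angle k m = (2 * real m + 1) * pi / (2 * real k)"

lemma node_angle_bounds:
  assumes "m < k"
  shows "0 < node_angle k m" "node_angle k m < pi"
proof -
  have "(2 * real m + 1) * pi < (2 * real k) * pi"
    using assms by (intro mult_strict_right_mono) simp_all
  then show "node_angle k m < pi"
    using assms by (simp add: node_angle_def field_simps)
  show "0 < node_angle k m"
    using assms by (simp add: node_angle_def add_pos_nonneg)
qed

lemma cos_node_angle_less:
  assumes "m < m'" "m' < k"
  shows "cos (node_angle k m') < cos (node_angle k m)"
proof (rule cos_monotone_0_pi)
  show "node_angle k m < node_angle k m'"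
    using assms by (simp add: node_angle_def divide_strict_right_mono)
qed (use assms node_angle_bounds[of m k] node_angle_bounds[of m' k] in auto)

lemma cos_node_angle_last:
  assumes "k > 0"
  shows "cos (node_angle k (k - 1)) = - cos (node_angle k 0)"
proof -
  have "node_angle k (k - 1) = pi - node_angle k 0"
    using assms by (simp add: node_angle_def of_nat_diff field_simps)
  then show ?thesis
    by simp
qed

lemma char_fun_sign:
  assumes k: "k \<ge> 4" and m: "m < k"
  shows "(-1) ^ m * char_fun k (cos (node_angle k m)) > 0"
proof -
  define t where "t = node_angle k m"
  have t: "0 < t" "t < pi"
    using node_angle_bounds[OF m] unfolding t_def by auto
  have kt: "real k * t = real m * pi + pi / 2"
    using k unfolding t_def node_angle_def by (simp add: field_simps)
  define G where "G = 9 + 6 * cos (2 * t) + cos (4 * t)"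
  have "G \<ge> 2"
    unfolding G_def using cos_ge_minus_one[of "2 * t"] cos_ge_minus_one[of "4 * t"] by linarith
  moreover have "cos t < 1"
    using cos_monotone_0_pi[of 0 t] t by simp
  ultimately have pos: "(1 - cos t) / 2 * G > 0"
    by simp
  have "9 * sin (real k * t) + 6 * sin ((real k - 2) * t) + sin ((real k - 4) * t) = (-1) ^ m * G"
    unfolding left_diff_distrib sin_diff kt G_def by (simp add: sin_add cos_add algebra_simps)
  then have eq: "4 * sin t * char_fun k (cos t) = (-1) ^ m * ((1 - cos t) / 2 * G)"
    using char_fun_cos[OF k, of t] by simp
  have "4 * sin t * ((-1) ^ m * char_fun k (cos t)) = (-1) ^ m * (4 * sin t * char_fun k (cos t))"
    by (simp add: ac_simps)
  also have "\<dots> = ((-1) ^ m * (-1) ^ m) * ((1 - cos t) / 2 * G)"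
    unfolding eq by (simp add: ac_simps)
  also have "\<dots> = (1 - cos t) / 2 * G"
    by (simp flip: power_add)
  finally have "4 * sin t * ((-1) ^ m * char_fun k (cos t)) > 0"
    using pos by simp
  then show ?thesis
    using sin_gt_zero[OF t] unfolding t_def by (simp add: zero_less_mult_iff)
qed

lemma eigen_seq_continuous: "isCont (\<lambda>l. eigen_seq l j) x"
  by (induction j rule: induct_nat_012) (simp_all add: continuous_intros)

lemma char_fun_root_between_nodes:
  assumes k: "k \<ge> 4" and m: "m + 1 < k"
  shows "\<exists>x. cos (node_angle k (m + 1)) < x \<and> x < cos (node_angle k m) \<and> char_fun k x = 0"
proof -
  define a b where "a = cos (node_angle k (m + 1))" and "b = cos (node_angle k m)"
  have "a < b"
    unfolding a_def b_def using m by (intro cos_node_angle_less) auto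
  have fb: "(-1) ^ m * char_fun k b > 0"
    unfolding b_def using k m by (intro char_fun_sign) auto
  have "(-1) ^ (m + 1) * char_fun k a > 0"
    unfolding a_def using k m by (intro char_fun_sign) auto
  then have fa: "(-1) ^ m * char_fun k a < 0"
    by simp
  have "\<exists>x. a \<le> x \<and> x \<le> b \<and> (-1) ^ m * char_fun k x = 0"
    using fa fb \<open>a < b\<close>
    by (intro IVT) (auto simp: char_fun_def intro!: continuous_intros eigen_seq_continuous)
  then obtain x where "a \<le> x" "x \<le> b" "char_fun k x = 0"
    by auto
  moreover from this have "x \<noteq> a" "x \<noteq> b"
    using fa fb by auto
  ultimately show ?thesis
    unfolding a_def b_def by force
qed

lemma cos_le_one_minus_sq_div_3:
  fixes x :: real
  assumes "0 < x" "x \<le> 2"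
  shows "cos x \<le> 1 - x^2 / 3"
proof -
  obtain t where "cos x = (\<Sum>m<4. cos_coeff m * x ^ m) + cos (t + 1/2 * real 4 * pi) / fact 4 * x ^ 4"
    using Maclaurin_cos_expansion2[of x 4] assms by auto
  then have "cos x = 1 - x^2 / 2 + cos t * x^4 / 24"
    by (simp add: cos_coeff_def lessThan_nat_numeral fact_numeral)
  also have "\<dots> \<le> 1 - x^2 / 2 + x^4 / 24"
    using mult_right_mono[OF cos_le_one[of t], of "x^4"] by simp
  also have "\<dots> \<le> 1 - x^2 / 3"
  proof -
    have "x^2 \<le> 2^2"
      using assms by (intro power_mono) auto
    then have "x^2 * x^2 \<le> 4 * x^2"
      by (intro mult_right_mono) auto
    then show ?thesis
      by (simp add: power4_eq_xxxx power2_eq_square)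
  qed
  finally show ?thesis .
qed

lemma cos_pi_div_2k_le:
  assumes "k \<ge> 1"
  shows "cos (pi / (2 * real k)) \<le> 1 - 1 / (3 * real k ^ 2)"
proof -
  have "pi / (2 * real k) \<le> 2"
    using assms pi_less_4 by (simp add: field_simps)
  then have "cos (pi / (2 * real k)) \<le> 1 - (pi / (2 * real k))^2 / 3"
    using assms by (intro cos_le_one_minus_sq_div_3) auto
  also have "\<dots> \<le> 1 - 1 / (3 * real k ^ 2)"
  proof -
    have "2^2 \<le> pi^2"
      using pi_ge_two by (intro power_mono) auto
    then show ?thesis
      using assms by (simp add: power_divide field_simps)
  qed
  finally show ?thesis .
qed

section \<open>The spectrum of \<open>P k\<close>\<close>

lemma eigen_seq_one: "eigen_seq 1 j = 1"
  by (induction j rule: induct_nat_012) simp_all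

lemma char_fun_one: "char_fun k 1 = 0"
  by (simp add: char_fun_def eigen_seq_one)

lemma P_listed_spectrum_ge_4:
  assumes k: "k \<ge> 4"
  shows "\<exists>lam. listed_spectrum (P k) k lam \<and> lam 1 = 1 \<and>
    (\<forall>i\<in>{2..k}. \<bar>lam i\<bar> < cos (node_angle k 0))"
proof -
  define c where "c m = cos (node_angle k m)" for m
  obtain \<rho> where \<rho>: "\<And>m. m + 1 < k \<Longrightarrow> c (m + 1) < \<rho> m \<and> \<rho> m < c m \<and> char_fun k (\<rho> m) = 0"
    using char_fun_root_between_nodes[OF k] unfolding c_def by metis
  have c_le: "c m' \<le> c m" if "m \<le> m'" "m' < k" for m m'
    using cos_node_angle_less[of m m' k] that unfolding c_def by (cases "m = m'") auto
  have "c 0 < 1"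
    using cos_monotone_0_pi[of 0 "node_angle k 0"] node_angle_bounds[of 0 k] k unfolding c_def by simp
  have \<rho>_bound: "\<bar>\<rho> m\<bar> < c 0" if "m + 1 < k" for m
  proof -
    have "c (k - 1) \<le> c (m + 1)" "c m \<le> c 0"
      using c_le that by auto
    then show ?thesis
      using \<rho>[OF that] cos_node_angle_last[of k] that unfolding c_def by auto
  qed
  define lam where "lam i = (if i \<le> 1 then 1 else \<rho> (i - 2))" for i
  have "lam j < lam i" if "1 \<le> i" "i < j" "j \<le> k" for i j
  proof (cases "i = 1")
    case True
    have "j - 2 + 1 < k"
      using that True by simp
    then show ?thesis
      using True that \<rho>_bound[of "j - 2"] \<open>c 0 < 1\<close> unfolding lam_def by auto
  next
    case False
    with that have idx: "i - 2 + 1 = i - 1" "i - 2 + 1 < k" "j - 2 + 1 < k" "i - 1 \<le> j - 2"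
      by auto
    have "\<rho> (j - 2) < c (j - 2)"
      using \<rho>[OF idx(3)] by simp
    also have "\<dots> \<le> c (i - 1)"
      using c_le idx by simp
    also have "\<dots> < \<rho> (i - 2)"
      using \<rho>[OF idx(2)] unfolding idx(1) by simp
    finally show ?thesis
      using that False unfolding lam_def by auto
  qed
  moreover have "eigenvalue (P k) (lam i)" if "i \<in> {1..k}" for i
    using that k \<rho>[of "i - 2"] char_fun_one unfolding lam_def
    by (cases "i = 1") (auto intro: eigenvalue_if_char_fun_zero)
  moreover have "\<bar>lam i\<bar> < c 0" if "i \<in> {2..k}" for i
    using that \<rho>_bound[of "i - 2"] unfolding lam_def by auto
  ultimately show ?thesis
    unfolding listed_spectrum_def c_def by (intro exI[of _ lam]) (auto simp: lam_def)
qed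

lemma P_listed_spectrum_3:
  "\<exists>lam. listed_spectrum (P 3) 3 lam \<and> lam 1 = 1 \<and> (\<forall>i\<in>{2..3}. \<bar>lam i\<bar> < cos (node_angle 3 0))"
proof -
  have rows: "eigenvalue (P 3) l"
    if "f 0 \<noteq> 0" "\<And>i. i < 3 \<Longrightarrow> (\<Sum>j<3. P 3 $$ (i, j) * f j) = l * f i" for f l
    using that by (intro eigenvalueI_mult_vec[OF P_carrier, of 0]) (auto simp: P_mult_vec)
  have "eigenvalue (P 3) 1"
    by (rule rows[of "\<lambda>_. 1"]) (auto simp: P_index U_entry_def eval_nat_numeral less_Suc_eq)
  moreover have "eigenvalue (P 3) (1/3)"
    by (rule rows[of "\<lambda>i. if i = 0 then 1 else if i = 1 then 0 else -1"])
      (auto simp: P_index U_entry_def eval_nat_numeral less_Suc_eq)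
  moreover have "eigenvalue (P 3) (-1/3)"
    by (rule rows[of "\<lambda>i. if i = 1 then -1 else 1"])
      (auto simp: P_index U_entry_def eval_nat_numeral less_Suc_eq)
  moreover have "1/3 < cos (node_angle 3 0)"
  proof -
    have "1 < sqrt 3"
      by simp
    then have "2 < 3 * sqrt 3"
      by linarith
    then show ?thesis
      by (simp add: node_angle_def cos_30)
  qed
  ultimately show ?thesis
    unfolding listed_spectrum_def
    by (intro exI[of _ "\<lambda>i. if i \<le> 1 then 1 else if i = 2 then 1/3 else -1/3"])
      (auto simp: eval_nat_numeral le_Suc_eq)
qed

lemma P_listed_spectrum:
  assumes "k \<ge> 3"
  shows "\<exists>lam. listed_spectrum (P k) k lam \<and> lam 1 = 1 \<and>
    (\<forall>i\<in>{2..k}. \<bar>lam i\<bar> < cos (node_angle k 0))"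
proof (cases "k = 3")
  case True
  then show ?thesis
    using P_listed_spectrum_3 by simp
next
  case False
  then show ?thesis
    using assms P_listed_spectrum_ge_4 by simp
qed

theorem lemma5:
  fixes k :: nat
  assumes "k \<ge> 3"
  shows "(\<forall>z :: complex. eigenvalue (map_mat complex_of_real (P k)) z \<longrightarrow> z \<in> \<real>) \<and>
    (\<exists>lam :: nat \<Rightarrow> real.
       (\<forall>i j. 1 \<le> i \<longrightarrow> i \<le> j \<longrightarrow> j \<le> k \<longrightarrow> lam j \<le> lam i) \<and>
       char_poly (P k) = (\<Prod>i = 1..k. [:- lam i, 1:]) \<and>
       lam 1 = 1 \<and>
       max \<bar>lam k\<bar> \<bar>lam 2\<bar> \<le> 1 - 1 / (3 * real k ^ 2))"
proof -
  obtain lam where spec: "listed_spectrum (P k) k lam" and "lam 1 = 1"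
    and small: "\<forall>i\<in>{2..k}. \<bar>lam i\<bar> < cos (node_angle k 0)"
    using P_listed_spectrum[OF assms] by blast
  have char_poly: "char_poly (P k) = (\<Prod>i = 1..k. [:- lam i, 1:])"
    by (rule char_poly_listed_spectrum[OF P_carrier spec])
  have "\<bar>lam k\<bar> < cos (node_angle k 0)" "\<bar>lam 2\<bar> < cos (node_angle k 0)"
    using small assms by auto
  moreover have "cos (node_angle k 0) \<le> 1 - 1 / (3 * real k ^ 2)"
    using cos_pi_div_2k_le[of k] assms by (simp add: node_angle_def)
  ultimately have "max \<bar>lam k\<bar> \<bar>lam 2\<bar> \<le> 1 - 1 / (3 * real k ^ 2)"
    by simp
  moreover have "lam j \<le> lam i" if "1 \<le> i" "i \<le> j" "j \<le> k" for i j
    using spec that unfolding listed_spectrum_def by (cases "i = j") (auto intro: less_imp_le)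
  moreover have "z \<in> \<real>" if "eigenvalue (map_mat complex_of_real (P k)) z" for z
    using eigenvalue_of_real_mat_real[OF P_carrier _ char_poly that] by simp
  ultimately show ?thesis
    using char_poly \<open>lam 1 = 1\<close> by blast
qed

end
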